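(* For $n\ge 2$, the number of interval-closed sets of $[2]\times[n]$ is \[|\mathcal{IC}([2]\times[n])|=1+2\left(\binom n2+n\right)+\frac{n+1}{2}\binom{n+2}{3}.\] Here $1$ counts the empty set, $2(\binom n2+n)$ counts the nonempty interval-closed sets contained entirely in the chain $\{(1,i)\}$ or entirely in the chain $\{(2,i)\}$, and $\frac{n+1}{2}\binom{n+2}{3}$ counts those meeting both chains.
   Context: $[n]$ is the chain $1<\cdots<n$; $[2]\times[n]$ is the Cartesian product poset with $(a,b)\le(c,d)$ iff $a\le c$ and $b\le d$. A subset $I$ of a poset is interval-closed if for all $x,y\in I$ and $z$ with $x\le z\le y$ we have $z\in I$; $\mathcal{IC}(P)$ is the set of interval-closed subsets. *)

theory Defs
  imports Complex_Main
begin

definition two_by_n :: "nat \<Rightarrow> (nat \<times> nat) set" where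
  "two_by_n n = {1..2::nat} \<times> {1..n}"

definition prod_le :: "nat \<times> nat \<Rightarrow> nat \<times> nat \<Rightarrow> bool" where
  "prod_le p q \<longleftrightarrow> fst p \<le> fst q \<and> snd p \<le> snd q"

definition interval_closed :: "'a set \<Rightarrow> ('a \<Rightarrow> 'a \<Rightarrow> bool) \<Rightarrow> 'a set \<Rightarrow> bool" where
  "interval_closed P le I \<longleftrightarrow> I \<subseteq> P \<and>
     (\<forall>x\<in>I. \<forall>y\<in>I. \<forall>z\<in>P. le x z \<and> le z y \<longrightarrow> z \<in> I)"

definition IC :: "'a set \<Rightarrow> ('a \<Rightarrow> 'a \<Rightarrow> bool) \<Rightarrow> 'a set set" where
  "IC P le = {I. interval_closed P le I}"

end

theory Submission
  imports Defs
begin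

(* A subset I of [2] x [n] is determined by its rows A = {i. (1,i) in I} and
   B = {i. (2,i) in I}.  It is interval-closed iff A and B are intervals of the chain [n]
   and every z with x <= z <= y for some x in A and y in B lies in both A and B.  For
   nonempty A = [l1,h1] and B = [l2,h2] the last condition says that either h2 < l1 or
   l2 <= l1 <= h2 <= h1.  Each of these two families corresponds to the weakly monotone
   4-tuples (4-multisets) of [n-1] resp. [n], so there are C(n+2,4) + C(n+3,4) of them,
   and this equals (n+1)/2 C(n+2,3).  Adding the empty set and the pairs with exactly
   one empty row, 2 C(n+1,2) = 2 (C(n,2) + n) in number, gives the formula. *)

definition rows :: "nat set \<Rightarrow> nat set \<Rightarrow> (nat \<times> nat) set" where
  "rows A B = Pair 1 ` A \<union> Pair 2 ` B"

lemma mem_rows_iff [simp]: "(c, z) \<in> rows A B \<longleftrightarrow> c = 1 \<and> z \<in> A \<or> c = 2 \<and> z \<in> B"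
  by (auto simp: rows_def)

lemma rows_row_1: "{z. (1, z) \<in> rows A B} = A"
  and rows_row_2: "{z. (2, z) \<in> rows A B} = B"
  by simp_all

lemma inj_rows: "inj (case_prod rows)"
  by (rule injI, clarify) (metis rows_row_1 rows_row_2)

lemma rows_of_subset:
  assumes "I \<subseteq> two_by_n n"
  shows "rows {z. (1, z) \<in> I} {z. (2, z) \<in> I} = I"
proof (intro equalityI subsetI)
  fix p assume "p \<in> I"
  moreover obtain c z where "p = (c, z)" by (cases p)
  moreover have "c = 1 \<or> c = 2" using assms calculation by (auto simp: two_by_n_def)
  ultimately show "p \<in> rows {z. (1, z) \<in> I} {z. (2, z) \<in> I}" by auto
qed auto

definition rows_compatible :: "nat set \<Rightarrow> nat set \<Rightarrow> bool" where
  "rows_compatible A B \<longleftrightarrow> (\<forall>x\<in>A. \<forall>y\<in>B. \<forall>z. x \<le> z \<and> z \<le> y \<longrightarrow> z \<in> A \<and> z \<in> B)"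

lemma rows_compatible_empty [simp]: "rows_compatible {} B" "rows_compatible A {}"
  by (simp_all add: rows_compatible_def)

lemma interval_closed_rows_iff:
  "interval_closed (two_by_n n) prod_le (rows A B) \<longleftrightarrow>
     interval_closed {1..n} (\<le>) A \<and> interval_closed {1..n} (\<le>) B \<and> rows_compatible A B"
proof
  assume ic: "interval_closed (two_by_n n) prod_le (rows A B)"
  have in_range: "z \<in> {1..n}" if "(c, z) \<in> rows A B" for c z
  proof -
    have "rows A B \<subseteq> two_by_n n"
      using ic by (simp add: interval_closed_def)
    then have "(c, z) \<in> two_by_n n"
      using that by (rule subsetD)
    then show ?thesis
      by (simp add: two_by_n_def)
  qed
  have between: "(c, z) \<in> rows A B"
    if "(i, x) \<in> rows A B" "(j, y) \<in> rows A B" "i \<le> c" "c \<le> j" "c \<in> {1..2}"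
       "x \<le> z" "z \<le> y" for i x j y c z
  proof -
    have "(c, z) \<in> two_by_n n"
      using in_range[OF that(1)] in_range[OF that(2)] that(5-7) by (simp add: two_by_n_def)
    moreover have "prod_le (i, x) (c, z)" "prod_le (c, z) (j, y)"
      using that(3,4,6,7) by (simp_all add: prod_le_def)
    ultimately show ?thesis
      using ic that(1,2) unfolding interval_closed_def by blast
  qed
  have "rows_compatible A B"
    unfolding rows_compatible_def
  proof (intro ballI allI impI)
    fix x y z assume "x \<in> A" "y \<in> B" "x \<le> z \<and> z \<le> y"
    then show "z \<in> A \<and> z \<in> B"
      using between[of 1 x 2 y 1 z] between[of 1 x 2 y 2 z] by simp
  qed
  moreover have row_closed: "interval_closed {1..n} (\<le>) {z. (c, z) \<in> rows A B}" if "c \<in> {1..2}" for c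
    unfolding interval_closed_def
  proof (intro conjI ballI impI subsetI)
    show "x \<in> {1..n}" if "x \<in> {z. (c, z) \<in> rows A B}" for x
      using in_range that by blast
    show "z \<in> {z. (c, z) \<in> rows A B}"
      if "x \<in> {z. (c, z) \<in> rows A B}" "y \<in> {z. (c, z) \<in> rows A B}" "x \<le> z \<and> z \<le> y" for x y z
      using between[of c x c y c z] \<open>c \<in> {1..2}\<close> that by simp
  qed
  moreover have "interval_closed {1..n} (\<le>) A" "interval_closed {1..n} (\<le>) B"
    using row_closed[of 1] row_closed[of 2] by (simp_all only: rows_row_1 rows_row_2) simp_all
  ultimately show "interval_closed {1..n} (\<le>) A \<and> interval_closed {1..n} (\<le>) B \<and> rows_compatible A B"
    by blast
next
  assume "interval_closed {1..n} (\<le>) A \<and> interval_closed {1..n} (\<le>) B \<and> rows_compatible A B"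
  then have A: "A \<subseteq> {1..n}" "\<And>x y z. x \<in> A \<Longrightarrow> y \<in> A \<Longrightarrow> z \<in> {1..n} \<Longrightarrow> x \<le> z \<Longrightarrow> z \<le> y \<Longrightarrow> z \<in> A"
    and B: "B \<subseteq> {1..n}" "\<And>x y z. x \<in> B \<Longrightarrow> y \<in> B \<Longrightarrow> z \<in> {1..n} \<Longrightarrow> x \<le> z \<Longrightarrow> z \<le> y \<Longrightarrow> z \<in> B"
    and AB: "\<And>x y z. x \<in> A \<Longrightarrow> y \<in> B \<Longrightarrow> x \<le> z \<Longrightarrow> z \<le> y \<Longrightarrow> z \<in> A \<and> z \<in> B"
    unfolding interval_closed_def rows_compatible_def by blast+
  have "r \<in> rows A B"
    if "p \<in> rows A B" "q \<in> rows A B" "r \<in> two_by_n n" "prod_le p r" "prod_le r q" for p q r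
  proof (cases p, cases q, cases r)
    fix i x j y c z assume pqr: "p = (i, x)" "q = (j, y)" "r = (c, z)"
    then have "i \<le> c" "c \<le> j" "x \<le> z" "z \<le> y" "c \<in> {1..2}" "z \<in> {1..n}"
      using that(3-5) by (simp_all add: prod_le_def two_by_n_def)
    then show ?thesis
      using that(1,2) pqr A(2)[of x y z] B(2)[of x y z] AB[of x y z] by auto
  qed
  moreover have "rows A B \<subseteq> two_by_n n"
    unfolding rows_def two_by_n_def using A(1) B(1) by auto
  ultimately show "interval_closed (two_by_n n) prod_le (rows A B)"
    unfolding interval_closed_def by blast
qed

lemma IC_two_by_n_eq:
  "IC (two_by_n n) prod_le = case_prod rows `
     {(A, B). interval_closed {1..n} (\<le>) A \<and> interval_closed {1..n} (\<le>) B \<and> rows_compatible A B}"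
  (is "_ = case_prod rows ` ?pairs")
proof (intro equalityI subsetI)
  fix I assume "I \<in> IC (two_by_n n) prod_le"
  then have ic: "interval_closed (two_by_n n) prod_le I"
    by (simp add: IC_def)
  then have "I \<subseteq> two_by_n n"
    by (simp add: interval_closed_def)
  then have I: "rows {z. (1, z) \<in> I} {z. (2, z) \<in> I} = I"
    by (rule rows_of_subset)
  have "interval_closed (two_by_n n) prod_le (rows {z. (1, z) \<in> I} {z. (2, z) \<in> I})"
    using ic by (simp only: I)
  then have "({z. (1, z) \<in> I}, {z. (2, z) \<in> I}) \<in> ?pairs"
    by (simp only: interval_closed_rows_iff mem_Collect_eq case_prod_conv)
  then have "case_prod rows ({z. (1, z) \<in> I}, {z. (2, z) \<in> I}) \<in> case_prod rows ` ?pairs"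
    by (rule imageI)
  then show "I \<in> case_prod rows ` ?pairs"
    by (simp only: case_prod_conv I)
next
  fix I assume "I \<in> case_prod rows ` ?pairs"
  then obtain A B where "(A, B) \<in> ?pairs" "I = rows A B"
    by blast
  then show "I \<in> IC (two_by_n n) prod_le"
    by (simp add: IC_def interval_closed_rows_iff)
qed

definition intervals :: "nat \<Rightarrow> nat set set" where
  "intervals n = {{l..h} | l h. 1 \<le> l \<and> l \<le> h \<and> h \<le> n}"

lemma finite_intervals: "finite (intervals n)"
  by (rule finite_subset[of _ "Pow {1..n}"]) (auto simp: intervals_def)

lemma Icc_mem_intervals: "1 \<le> l \<Longrightarrow> l \<le> h \<Longrightarrow> h \<le> n \<Longrightarrow> {l..h} \<in> intervals n"
  unfolding intervals_def mem_Collect_eq by (intro exI[of _ l] exI[of _ h]) simp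

lemma interval_closed_chain_iff:
  "interval_closed {1..n} (\<le>) A \<longleftrightarrow> A = {} \<or> A \<in> intervals n"
proof
  assume ic: "interval_closed {1..n} (\<le>) A"
  show "A = {} \<or> A \<in> intervals n"
  proof (cases "A = {}")
    case False
    have sub: "A \<subseteq> {1..n}"
      using ic by (simp add: interval_closed_def)
    then have "finite A"
      by (rule finite_subset) simp
    then have ends: "Min A \<in> A" "Max A \<in> A"
      using False by simp_all
    have bounds: "1 \<le> Min A" "Min A \<le> Max A" "Max A \<le> n"
      using ends sub \<open>finite A\<close> by auto
    have "z \<in> A" if "z \<in> {Min A..Max A}" for z
    proof -
      have "z \<in> {1..n}"
        using that bounds by simp
      with ic ends that show ?thesis
        unfolding interval_closed_def by (meson atLeastAtMost_iff)
    qed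
    moreover have "A \<subseteq> {Min A..Max A}"
      using \<open>finite A\<close> by auto
    ultimately have "A = {Min A..Max A}" by blast
    with bounds show ?thesis
      unfolding intervals_def by blast
  qed simp
next
  assume "A = {} \<or> A \<in> intervals n"
  then show "interval_closed {1..n} (\<le>) A"
    unfolding interval_closed_def intervals_def by fastforce
qed

lemma rows_compatible_intervals_iff:
  assumes "l1 \<le> h1" "l2 \<le> h2"
  shows "rows_compatible {l1..h1} {l2..h2} \<longleftrightarrow> h2 < l1 \<or> l2 \<le> l1 \<and> h2 \<le> h1"
proof
  assume "rows_compatible {l1..h1} {l2..h2}"
  then have "l1 \<le> h2 \<Longrightarrow> l1 \<in> {l2..h2} \<and> h2 \<in> {l1..h1}"
    unfolding rows_compatible_def using assms by (meson atLeastAtMost_iff order_refl)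
  then show "h2 < l1 \<or> l2 \<le> l1 \<and> h2 \<le> h1"
    by (cases "l1 \<le> h2") auto
qed (auto simp: rows_compatible_def)

lemma card_IC_two_by_n:
  "card (IC (two_by_n n) prod_le) =
     1 + 2 * card (intervals n) + card {(A, B) \<in> intervals n \<times> intervals n. rows_compatible A B}"
proof -
  let ?J = "intervals n"
  let ?pairs = "{(A, B). interval_closed {1..n} (\<le>) A \<and> interval_closed {1..n} (\<le>) B \<and> rows_compatible A B}"
  let ?P = "{(A, B) \<in> ?J \<times> ?J. rows_compatible A B}"
  have "?pairs = {({}, {})} \<union> ({{}} \<times> ?J) \<union> (?J \<times> {{}}) \<union> ?P"
    unfolding interval_closed_chain_iff by auto
  moreover have "{} \<notin> ?J"
    by (auto simp: intervals_def)
  moreover have "finite ?P"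
    using finite_intervals by (auto intro: finite_subset[of _ "?J \<times> ?J"])
  ultimately have "card ?pairs = 1 + card ?J + card ?J + card ?P"
    using finite_intervals[of n] by (simp add: card_Un_disjoint card_cartesian_product disjoint_iff)
  moreover have "card (IC (two_by_n n) prod_le) = card ?pairs"
    unfolding IC_two_by_n_eq by (rule card_image) (rule inj_on_subset[OF inj_rows subset_UNIV])
  ultimately show ?thesis by simp
qed

(* The k-element multisets of {1..m}, each listed in decreasing order. *)
definition descending_lists :: "nat \<Rightarrow> nat \<Rightarrow> nat list set" where
  "descending_lists k m = {xs. length xs = k \<and> sorted_wrt (\<ge>) xs \<and> set xs \<subseteq> {1..m}}"

lemma descending_lists_0 [simp]: "descending_lists 0 m = {[]}"
  by (auto simp: descending_lists_def)

lemma Cons_mem_descending_lists_iff: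
  "z # ys \<in> descending_lists (Suc k) m \<longleftrightarrow> z \<in> {1..m} \<and> ys \<in> descending_lists k z"
  by (auto simp: descending_lists_def)

lemma descending_lists_Suc:
  "descending_lists (Suc k) m = (\<Union>z\<in>{1..m}. (#) z ` descending_lists k z)"
proof (intro equalityI subsetI)
  fix xs assume "xs \<in> descending_lists (Suc k) m"
  moreover from this obtain z ys where "xs = z # ys"
    by (cases xs) (auto simp: descending_lists_def)
  ultimately show "xs \<in> (\<Union>z\<in>{1..m}. (#) z ` descending_lists k z)"
    by (auto simp: Cons_mem_descending_lists_iff)
qed (auto simp: Cons_mem_descending_lists_iff)

lemma finite_descending_lists: "finite (descending_lists k m)"
  unfolding descending_lists_def
  by (rule finite_subset[OF _ finite_lists_length_eq[of "{1..m}" k]]) auto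

lemma card_descending_lists: "card (descending_lists k m) = (m + k - 1) choose k"
proof (induction k arbitrary: m)
  case 0
  then show ?case by simp
next
  case (Suc k)
  from Suc.IH have card_k: "\<And>m. card (descending_lists k m) = (m + k - 1) choose k" .
  show ?case
  proof (induction m)
    case 0
    then show ?case by (simp add: descending_lists_Suc)
  next
    case (Suc m)
    have "descending_lists (Suc k) (Suc m) = descending_lists (Suc k) m \<union> (#) (Suc m) ` descending_lists k (Suc m)"
      by (simp add: descending_lists_Suc atLeastAtMostSuc_conv Un_commute)
    moreover have "descending_lists (Suc k) m \<inter> (#) (Suc m) ` descending_lists k (Suc m) = {}"
      by (auto simp: descending_lists_Suc)
    ultimately have "card (descending_lists (Suc k) (Suc m))
        = card (descending_lists (Suc k) m) + card (descending_lists k (Suc m))"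
      using finite_descending_lists by (simp add: card_Un_disjoint card_image)
    then show ?case
      using Suc.IH card_k by simp
  qed
qed

lemma length_descending_lists: "xs \<in> descending_lists k m \<Longrightarrow> length xs = k"
  by (simp add: descending_lists_def)

lemma descending_lists_2:
  "descending_lists 2 m = {[h, l] | h l. 1 \<le> l \<and> l \<le> h \<and> h \<le> m}"
proof (intro equalityI subsetI)
  fix xs assume xs: "xs \<in> descending_lists 2 m"
  then obtain h l where "xs = [h, l]"
    using length_descending_lists[OF xs] by (auto simp: numeral_2_eq_2 length_Suc_conv)
  with xs show "xs \<in> {[h, l] | h l. 1 \<le> l \<and> l \<le> h \<and> h \<le> m}"
    by (simp add: numeral_2_eq_2 Cons_mem_descending_lists_iff)
qed (auto simp: numeral_2_eq_2 Cons_mem_descending_lists_iff)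

lemma descending_lists_4:
  "descending_lists 4 m = {[a, b, c, d] | a b c d. 1 \<le> d \<and> d \<le> c \<and> c \<le> b \<and> b \<le> a \<and> a \<le> m}"
proof (intro equalityI subsetI)
  fix xs assume xs: "xs \<in> descending_lists 4 m"
  then obtain a b c d where "xs = [a, b, c, d]"
    using length_descending_lists[OF xs] by (auto simp: eval_nat_numeral length_Suc_conv)
  with xs show "xs \<in> {[a, b, c, d] | a b c d. 1 \<le> d \<and> d \<le> c \<and> c \<le> b \<and> b \<le> a \<and> a \<le> m}"
    by (simp add: eval_nat_numeral Cons_mem_descending_lists_iff)
qed (auto simp: eval_nat_numeral Cons_mem_descending_lists_iff)

lemma card_intervals: "card (intervals n) = Suc n choose 2"
proof -
  have "intervals n = (\<lambda>xs. {xs ! 1..xs ! 0}) ` descending_lists 2 n"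
    unfolding intervals_def descending_lists_2 by force
  moreover have "inj_on (\<lambda>xs. {xs ! 1..xs ! 0}) (descending_lists 2 n)"
    by (auto simp: inj_on_def descending_lists_2)
  ultimately show ?thesis
    by (simp add: card_image card_descending_lists)
qed

definition separated_interval_pairs :: "nat \<Rightarrow> (nat set \<times> nat set) set" where
  "separated_interval_pairs n = {({l1..h1}, {l2..h2}) | l1 h1 l2 h2. 1 \<le> l2 \<and> l2 \<le> h2 \<and> h2 < l1 \<and> l1 \<le> h1 \<and> h1 \<le> n}"

definition overlapping_interval_pairs :: "nat \<Rightarrow> (nat set \<times> nat set) set" where
  "overlapping_interval_pairs n = {({l1..h1}, {l2..h2}) | l1 h1 l2 h2. 1 \<le> l2 \<and> l2 \<le> l1 \<and> l1 \<le> h2 \<and> h2 \<le> h1 \<and> h1 \<le> n}"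

lemma compatible_intervals_eq:
  "{(A, B) \<in> intervals n \<times> intervals n. rows_compatible A B} =
     separated_interval_pairs n \<union> overlapping_interval_pairs n"
  (is "?P = ?separated \<union> ?overlapping")
proof (intro equalityI subsetI)
  fix p assume "p \<in> ?P"
  then obtain l1 h1 l2 h2 where p: "p = ({l1..h1}, {l2..h2})"
    and bounds: "1 \<le> l1" "l1 \<le> h1" "h1 \<le> n" "1 \<le> l2" "l2 \<le> h2" "h2 \<le> n"
    and "rows_compatible {l1..h1} {l2..h2}"
    unfolding intervals_def by blast
  then have "h2 < l1 \<or> l2 \<le> l1 \<and> h2 \<le> h1"
    by (simp add: rows_compatible_intervals_iff)
  then show "p \<in> ?separated \<union> ?overlapping"
  proof (cases "h2 < l1")
    case False
    with \<open>h2 < l1 \<or> l2 \<le> l1 \<and> h2 \<le> h1\<close> have "l2 \<le> l1" "l1 \<le> h2" "h2 \<le> h1"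
      by simp_all
    with p bounds show ?thesis
      unfolding overlapping_interval_pairs_def by blast
  qed (use p bounds in \<open>auto simp: separated_interval_pairs_def\<close>)
next
  fix p assume "p \<in> ?separated \<union> ?overlapping"
  then obtain l1 h1 l2 h2 where p: "p = ({l1..h1}, {l2..h2})"
    and "1 \<le> l2 \<and> l2 \<le> h2 \<and> h2 < l1 \<and> l1 \<le> h1 \<and> h1 \<le> n \<or>
         1 \<le> l2 \<and> l2 \<le> l1 \<and> l1 \<le> h2 \<and> h2 \<le> h1 \<and> h1 \<le> n"
    unfolding separated_interval_pairs_def overlapping_interval_pairs_def by blast
  then have "1 \<le> l1" "l1 \<le> h1" "h1 \<le> n" "1 \<le> l2" "l2 \<le> h2" "h2 \<le> n"
    and "h2 < l1 \<or> l2 \<le> l1 \<and> h2 \<le> h1"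
    by auto
  then show "p \<in> ?P"
    using p by (simp add: Icc_mem_intervals rows_compatible_intervals_iff)
qed

lemma card_separated_interval_pairs:
  "card (separated_interval_pairs n) = (n + 2) choose 4"
proof -
  \<comment> \<open>Lowering the upper interval by one turns \<open>h2 < l1\<close> into a weak inequality.\<close>
  let ?f = "\<lambda>xs. ({Suc (xs ! 1)..Suc (xs ! 0)}, {xs ! 3..xs ! 2})"
  have "separated_interval_pairs n = ?f ` descending_lists 4 (n - 1)"
  proof (intro equalityI subsetI)
    fix p assume "p \<in> separated_interval_pairs n"
    then obtain l1 h1 l2 h2 where p: "p = ({l1..h1}, {l2..h2})"
      and bounds: "1 \<le> l2" "l2 \<le> h2" "h2 < l1" "l1 \<le> h1" "h1 \<le> n"
      unfolding separated_interval_pairs_def by blast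
    then have "[h1 - 1, l1 - 1, h2, l2] \<in> descending_lists 4 (n - 1)"
      by (simp add: descending_lists_4) arith
    moreover have "p = ?f [h1 - 1, l1 - 1, h2, l2]"
      using p bounds by simp
    ultimately show "p \<in> ?f ` descending_lists 4 (n - 1)"
      by (rule rev_image_eqI)
  next
    fix p assume "p \<in> ?f ` descending_lists 4 (n - 1)"
    then obtain a b c d where p: "p = ({Suc b..Suc a}, {d..c})"
      and "1 \<le> d" "d \<le> c" "c \<le> b" "b \<le> a" "a \<le> n - 1"
      by (auto simp: descending_lists_4)
    then have "1 \<le> d" "d \<le> c" "c < Suc b" "Suc b \<le> Suc a" "Suc a \<le> n"
      by simp_all
    with p show "p \<in> separated_interval_pairs n"
      unfolding separated_interval_pairs_def by blast
  qed
  moreover have "inj_on ?f (descending_lists 4 (n - 1))"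
    by (auto simp: inj_on_def descending_lists_4)
  moreover have "card (descending_lists 4 (n - 1)) = (n + 2) choose 4"
    by (cases n) (simp_all add: card_descending_lists binomial_eq_0 eval_nat_numeral)
  ultimately show ?thesis
    by (simp add: card_image)
qed

lemma card_overlapping_interval_pairs:
  "card (overlapping_interval_pairs n) = (n + 3) choose 4"
proof -
  let ?f = "\<lambda>xs. ({xs ! 2..xs ! 0}, {xs ! 3..xs ! 1})"
  have "overlapping_interval_pairs n = ?f ` descending_lists 4 n"
  proof (intro equalityI subsetI)
    fix p assume "p \<in> overlapping_interval_pairs n"
    then obtain l1 h1 l2 h2 where p: "p = ({l1..h1}, {l2..h2})"
      and "1 \<le> l2" "l2 \<le> l1" "l1 \<le> h2" "h2 \<le> h1" "h1 \<le> n"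
      unfolding overlapping_interval_pairs_def by blast
    then have "[h1, h2, l1, l2] \<in> descending_lists 4 n"
      by (simp add: descending_lists_4)
    moreover have "p = ?f [h1, h2, l1, l2]"
      using p by simp
    ultimately show "p \<in> ?f ` descending_lists 4 n"
      by (rule rev_image_eqI)
  next
    fix p assume "p \<in> ?f ` descending_lists 4 n"
    then obtain a b c d where "p = ({c..a}, {d..b})"
      and "1 \<le> d" "d \<le> c" "c \<le> b" "b \<le> a" "a \<le> n"
      by (auto simp: descending_lists_4)
    then show "p \<in> overlapping_interval_pairs n"
      unfolding overlapping_interval_pairs_def by blast
  qed
  moreover have "inj_on ?f (descending_lists 4 n)"
    by (auto simp: inj_on_def descending_lists_4)
  ultimately show ?thesis
    by (simp add: card_image card_descending_lists add.commute)
qed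

lemma card_compatible_intervals:
  "card {(A, B) \<in> intervals n \<times> intervals n. rows_compatible A B} = ((n + 2) choose 4) + ((n + 3) choose 4)"
proof -
  let ?separated = "separated_interval_pairs n"
  let ?overlapping = "overlapping_interval_pairs n"
  have "finite (?separated \<union> ?overlapping)"
    unfolding compatible_intervals_eq[symmetric] using finite_intervals
    by (auto intro: finite_subset[of _ "intervals n \<times> intervals n"])
  moreover have "?separated \<inter> ?overlapping = {}"
    by (auto simp: separated_interval_pairs_def overlapping_interval_pairs_def)
  ultimately have "card (?separated \<union> ?overlapping) = card ?separated + card ?overlapping"
    by (simp add: card_Un_disjoint)
  then show ?thesis
    by (simp only: compatible_intervals_eq card_separated_interval_pairs card_overlapping_interval_pairs)
qed

lemma Suc_choose_two: "Suc n choose 2 = (n choose 2) + n"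
  by (simp add: numeral_2_eq_2)

lemma choose_4_sum: "2 * (((n + 2) choose 4) + ((n + 3) choose 4)) = (n + 1) * ((n + 2) choose 3)"
proof -
  have pascal: "(n + 3) choose 4 = ((n + 2) choose 3) + ((n + 2) choose 4)"
    using binomial_Suc_Suc[of "n + 2" 3] by (simp add: numeral_eq_Suc)
  have "((n + 2) choose 4) * 4 = (n + 2) * ((n + 1) choose 3)"
    using Suc_times_binomial_eq[of "n + 1" 3] by simp
  also have "\<dots> = (n - 1) * ((n + 2) choose 3)"
    using binomial_absorb_comp[of "n + 2" 3] by simp
  finally have absorb: "4 * ((n + 2) choose 4) = (n - 1) * ((n + 2) choose 3)"
    by simp
  show ?thesis
  proof (cases n)
    case (Suc m)
    then show ?thesis
      using pascal absorb by (simp add: algebra_simps)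
  qed (simp add: binomial_eq_0)
qed

theorem theorem4p2:
  fixes n :: nat
  assumes "n \<ge> 2"
  shows "real (card (IC (two_by_n n) prod_le))
    = 1 + 2 * (real (n choose 2) + real n) + (real n + 1) / 2 * real ((n + 2) choose 3)"
proof -
  have "card (IC (two_by_n n) prod_le) = 1 + 2 * ((n choose 2) + n) + (((n + 2) choose 4) + ((n + 3) choose 4))"
    by (simp only: card_IC_two_by_n card_intervals Suc_choose_two card_compatible_intervals)
  moreover have "real (((n + 2) choose 4) + ((n + 3) choose 4)) = (real n + 1) / 2 * real ((n + 2) choose 3)"
  proof -
    have "real (2 * (((n + 2) choose 4) + ((n + 3) choose 4))) = real ((n + 1) * ((n + 2) choose 3))"
      by (simp only: choose_4_sum)
    then show ?thesis
      by (simp add: field_simps)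
  qed
  ultimately show ?thesis
    by simp
qed

end
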